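(* Let $p\in\mathbb R^n$, $\omega\in\mathbb R^p$, let $\xi=p^aP_a+\omega^iL_i$ and let $\psi_t$ be the one-parameter group of isometries generated by $\xi$, $\hat x=\psi_t(x)$. Define $O^a{}_b=e^a{}_{\hat\alpha}(\hat x)\,\frac{\partial\hat x^\alpha}{\partial x^\mu}\,e_b{}^\mu(x)$. Then for $p=0$ and $x=x'$ (i.e. $y=0$), $$O\big|_{p=y=0}=\exp[-tD(\omega)],\qquad D(\omega)=\omega^iD_i.$$
   Context: $(M,g)$ is an $n$-dimensional complete simply connected Riemannian manifold with parallel Riemann tensor (a Riemannian symmetric space). Fix $x'\in M$ and an orthonormal frame $e_a{}^\mu(x')$ at $x'$, extended to a neighbourhood to an orthonormal frame $e_a{}^\mu(x)$ by parallel transport along the geodesics from $x'$, with dual coframe $e^a{}_\mu$; let $y^a$ be the corresponding Riemann normal coordinates centred at $x'$. Frame indices $a,b,\dots\in\{1,\dots,n\}$ are raised/lowered with $\delta_{ab}$; $R_{abcd}$ are the frame components of the curvature at $x'$. The curvature is written as $R_{abcd}=\beta_{ik}E^i{}_{ab}E^k{}_{cd}$ with $E^i{}_{ab}$ ($i=1,\dots,p$) antisymmetric $n\times n$ matrices and $(\beta_{ik})$ real symmetric nondegenerate; $D^a{}_{ib}=-\beta_{ik}E^k{}_{cb}\delta^{ca}$. With $K^a{}_b=R^a{}_{cbd}y^cy^d$, the Killing vector fields are $P_a=(\sqrt K\cot\sqrt K)^b{}_a\,\partial/\partial y^b$ and $L_i=-D^b{}_{ia}y^a\,\partial/\partial y^b$.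 *)

theory Defs
  imports "HOL-Analysis.Analysis"
begin

text \<open>Square matrices are real^'n^'n (row index first).  Frame indices a,b range over
  the finite type 'n (dimension n = CARD('n)); the indices i,k of the curvature
  decomposition range over the finite type 'p.\<close>

definition mat_pow :: "real^'n^'n \<Rightarrow> nat \<Rightarrow> real^'n^'n" where
  "mat_pow A k = (((**) A) ^^ k) (mat 1)"

definition mat_exp :: "real^'n^'n \<Rightarrow> real^'n^'n" where
  "mat_exp A = (\<Sum>k. (1 / fact k) *\<^sub>R mat_pow A k)"

definition curv :: "real^'p^'p \<Rightarrow> ('p \<Rightarrow> real^'n^'n) \<Rightarrow> 'n \<Rightarrow> 'n \<Rightarrow> 'n \<Rightarrow> 'n \<Rightarrow> real" where
  "curv \<beta> E a b c d = (\<Sum>i\<in>UNIV. \<Sum>k\<in>UNIV. \<beta>$i$k * (E i)$a$b * (E k)$c$d)"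

text \<open>D^a_{ib} = - beta_ik E^k_{cb} delta^{ca} = - beta_ik E^k_{ab}; matrix D_i with
  entry (a,b).\<close>
definition Dmat :: "real^'p^'p \<Rightarrow> ('p \<Rightarrow> real^'n^'n) \<Rightarrow> 'p \<Rightarrow> real^'n^'n" where
  "Dmat \<beta> E i = (\<chi> a b. - (\<Sum>k\<in>UNIV. \<beta>$i$k * (E k)$a$b))"

definition Domega :: "real^'p^'p \<Rightarrow> ('p \<Rightarrow> real^'n^'n) \<Rightarrow> real^'p \<Rightarrow> real^'n^'n" where
  "Domega \<beta> E \<omega> = (\<Sum>i\<in>UNIV. \<omega>$i *\<^sub>R Dmat \<beta> E i)"

text \<open>Killing field L_i in normal coordinates y: L_i = - D^b_{ia} y^a d/dy^b.\<close>
definition Lfield :: "real^'p^'p \<Rightarrow> ('p \<Rightarrow> real^'n^'n) \<Rightarrow> 'p \<Rightarrow> real^'n \<Rightarrow> real^'n" where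
  "Lfield \<beta> E i y = (\<chi> b. - (\<Sum>a\<in>UNIV. (Dmat \<beta> E i)$b$a * y$a))"

definition xi0 :: "real^'p^'p \<Rightarrow> ('p \<Rightarrow> real^'n^'n) \<Rightarrow> real^'p \<Rightarrow> real^'n \<Rightarrow> real^'n" where
  "xi0 \<beta> E \<omega> y = (\<Sum>i\<in>UNIV. \<omega>$i *\<^sub>R Lfield \<beta> E i y)"

end

theory Submission
  imports Defs
begin

text \<open>For \<open>p = 0\<close> the Killing field \<open>\<xi> = \<omega>\<^sup>i L\<^sub>i\<close> is linear in normal coordinates,
  \<open>\<xi>(y) = -D(\<omega>) y\<close>, so its flow is the linear map \<open>y \<mapsto> exp(-t D(\<omega>)) y\<close>. This flow fixes the
  origin \<open>x'\<close>, where the frame is the identity, so \<open>O\<close> is just the Jacobian of the flow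
  at the origin, namely \<open>exp(-t D(\<omega>))\<close>.\<close>

text \<open>The endomorphisms of \<open>real^'n\<close> as a Banach algebra, so that the library's \<open>exp\<close> and
  its derivative rules become available. A new type is needed because type classes cannot be
  instantiated on \<open>(real^'n) \<Rightarrow>\<^sub>L (real^'n)\<close> with equal argument types.\<close>

typedef (overloaded) ('n::finite) linop = "UNIV :: ((real^'n) \<Rightarrow>\<^sub>L (real^'n)) set"
  morphisms blinfun_of_linop Abs_linop by auto
setup_lifting type_definition_linop

instantiation linop :: (finite) real_normed_vector
begin
lift_definition zero_linop :: "'a linop" is "0::(real^'a) \<Rightarrow>\<^sub>L (real^'a)" .
lift_definition plus_linop :: "'a linop \<Rightarrow> 'a linop \<Rightarrow> 'a linop" is
  "(+)::(real^'a) \<Rightarrow>\<^sub>L (real^'a) \<Rightarrow> _ \<Rightarrow> _" .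
lift_definition minus_linop :: "'a linop \<Rightarrow> 'a linop \<Rightarrow> 'a linop" is
  "(-)::(real^'a) \<Rightarrow>\<^sub>L (real^'a) \<Rightarrow> _ \<Rightarrow> _" .
lift_definition uminus_linop :: "'a linop \<Rightarrow> 'a linop" is
  "uminus::(real^'a) \<Rightarrow>\<^sub>L (real^'a) \<Rightarrow> _" .
lift_definition scaleR_linop :: "real \<Rightarrow> 'a linop \<Rightarrow> 'a linop" is
  "scaleR::real \<Rightarrow> (real^'a) \<Rightarrow>\<^sub>L (real^'a) \<Rightarrow> _" .
lift_definition norm_linop :: "'a linop \<Rightarrow> real" is "norm::(real^'a) \<Rightarrow>\<^sub>L (real^'a) \<Rightarrow> real" .
lift_definition dist_linop :: "'a linop \<Rightarrow> 'a linop \<Rightarrow> real" is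
  "dist::(real^'a) \<Rightarrow>\<^sub>L (real^'a) \<Rightarrow> _ \<Rightarrow> real" .
definition sgn_linop :: "'a linop \<Rightarrow> 'a linop" where "sgn_linop x = inverse (norm x) *\<^sub>R x"
definition uniformity_linop :: "('a linop \<times> 'a linop) filter" where
  "uniformity_linop = (INF e\<in>{0 <..}. principal {(x, y). dist x y < e})"
definition open_linop :: "'a linop set \<Rightarrow> bool" where
  "open_linop S = (\<forall>x\<in>S. \<forall>\<^sub>F (x', y) in uniformity. x' = x \<longrightarrow> y \<in> S)"
instance
  apply standard
  unfolding sgn_linop_def uniformity_linop_def open_linop_def
  apply (rule refl | (transfer, force simp: dist_norm norm_triangle_ineq algebra_simps))+
  done
end

instantiation linop :: (finite) real_normed_algebra_1
begin
lift_definition times_linop :: "'a linop \<Rightarrow> 'a linop \<Rightarrow> 'a linop" is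
  "blinfun_compose::(real^'a) \<Rightarrow>\<^sub>L (real^'a) \<Rightarrow> _ \<Rightarrow> _" .
lift_definition one_linop :: "'a linop" is "id_blinfun::(real^'a) \<Rightarrow>\<^sub>L (real^'a)" .
instance
proof
  show "(0::'a linop) \<noteq> 1"
  proof transfer
    have "(0::(real^'a) \<Rightarrow>\<^sub>L (real^'a)) (axis undefined 1) \<noteq> id_blinfun (axis undefined 1)"
      by (simp add: axis_eq_0_iff)
    then show "(0::(real^'a) \<Rightarrow>\<^sub>L (real^'a)) \<noteq> id_blinfun" by metis
  qed
  show "norm (1::'a linop) = 1" by transfer simp
qed (transfer; auto intro!: blinfun_eqI simp: blinfun.bilinear_simps norm_blinfun_compose)+
end

instance linop :: (finite) banach
proof
  fix X :: "nat \<Rightarrow> 'a linop"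
  assume "Cauchy X"
  then have "Cauchy (\<lambda>k. blinfun_of_linop (X k))"
    unfolding Cauchy_def by (simp add: dist_linop.rep_eq)
  then obtain L where L: "(\<lambda>k. blinfun_of_linop (X k)) \<longlonglongrightarrow> L"
    using convergent_def Cauchy_convergent_iff by blast
  have "X \<longlonglongrightarrow> Abs_linop L"
    using L unfolding tendsto_iff by (simp add: dist_linop.rep_eq Abs_linop_inverse)
  then show "convergent X" by (auto simp: convergent_def)
qed

definition linop_apply :: "'n::finite linop \<Rightarrow> real^'n \<Rightarrow> real^'n" where
  "linop_apply X v = blinfun_apply (blinfun_of_linop X) v"

lemma linop_apply_times: "linop_apply (X * Y) v = linop_apply X (linop_apply Y v)"
  unfolding linop_apply_def by (simp add: times_linop.rep_eq)

lemma linop_apply_one: "linop_apply 1 v = v"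
  unfolding linop_apply_def by (simp add: one_linop.rep_eq)

lemma bounded_bilinear_linop_apply: "bounded_bilinear (linop_apply :: 'n::finite linop \<Rightarrow> _)"
proof -
  have "bounded_bilinear (\<lambda>(X::'n linop) v. blinfun_apply (blinfun_of_linop X) v)"
  proof
    show "\<exists>K. \<forall>X v. norm (blinfun_apply (blinfun_of_linop X) v) \<le> norm X * norm v * K"
      by (rule exI[where x=1]) (simp add: norm_linop.rep_eq norm_blinfun)
  qed (simp_all add: plus_linop.rep_eq scaleR_linop.rep_eq blinfun.bilinear_simps)
  then show ?thesis unfolding linop_apply_def .
qed

interpretation linop_apply: bounded_bilinear linop_apply
  by (rule bounded_bilinear_linop_apply)

lemma linear_linop_apply: "linear (linop_apply X)"
  using linop_apply.bounded_linear_right bounded_linear.linear by blast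

definition matrix_of_linop :: "'n::finite linop \<Rightarrow> real^'n^'n" where
  "matrix_of_linop X = matrix (linop_apply X)"

definition linop_of_matrix :: "real^'n^'n \<Rightarrow> 'n::finite linop" where
  "linop_of_matrix A = Abs_linop (Blinfun (\<lambda>v. A *v v))"

lemma linop_apply_of_matrix: "linop_apply (linop_of_matrix A) v = A *v v"
proof -
  have "bounded_linear (\<lambda>v. A *v v)"
    by (simp add: linear_conv_bounded_linear)
  then show ?thesis
    unfolding linop_apply_def linop_of_matrix_def
    by (simp add: Abs_linop_inverse bounded_linear_Blinfun_apply)
qed

lemma matrix_of_linop_of_matrix: "matrix_of_linop (linop_of_matrix A) = A"
  unfolding matrix_of_linop_def linop_apply_of_matrix[abs_def] by simp

lemma matrix_of_linop_component: "matrix_of_linop X $ i $ j = linop_apply X (axis j 1) $ i"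
  unfolding matrix_of_linop_def matrix_def by simp

lemma matrix_of_linop_times: "matrix_of_linop (X * Y) = matrix_of_linop X ** matrix_of_linop Y"
proof -
  have "linop_apply (X * Y) = linop_apply X \<circ> linop_apply Y"
    by (auto simp: linop_apply_times)
  then show ?thesis
    unfolding matrix_of_linop_def
    using matrix_compose[OF linear_linop_apply linear_linop_apply] by simp
qed

lemma matrix_of_linop_one: "matrix_of_linop 1 = mat 1"
proof -
  have "linop_apply 1 = id" by (auto simp: linop_apply_one)
  then show ?thesis unfolding matrix_of_linop_def by (metis matrix_id_mat_1)
qed

lemma matrix_of_linop_power: "matrix_of_linop (X ^ k) = mat_pow (matrix_of_linop X) k"
  by (induction k) (simp_all add: mat_pow_def matrix_of_linop_one matrix_of_linop_times)

lemma matrix_of_linop_scaleR: "matrix_of_linop (r *\<^sub>R X) = r *\<^sub>R matrix_of_linop X"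
  by (simp add: vec_eq_iff matrix_of_linop_component linop_apply.scaleR_left)

lemma norm_matrix_of_linop_le:
  "norm (matrix_of_linop X) \<le> norm X * (real CARD('n) * real CARD('n))"
  for X :: "'n::finite linop"
proof -
  have entry: "\<bar>matrix_of_linop X $ i $ j\<bar> \<le> norm X" for i j
  proof -
    have "\<bar>matrix_of_linop X $ i $ j\<bar> \<le> norm (linop_apply X (axis j 1))"
      unfolding matrix_of_linop_component by (rule component_le_norm_cart)
    also have "\<dots> \<le> norm X * norm (axis j (1::real))"
      unfolding linop_apply_def norm_linop.rep_eq by (rule norm_blinfun)
    finally show ?thesis by simp
  qed
  have row: "norm (matrix_of_linop X $ i) \<le> norm X * real CARD('n)" for i
  proof -
    have "norm (matrix_of_linop X $ i) \<le> (\<Sum>j\<in>UNIV. \<bar>matrix_of_linop X $ i $ j\<bar>)"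
      by (rule norm_le_l1_cart)
    also have "\<dots> \<le> (\<Sum>j\<in>(UNIV::'n set). norm X)"
      by (rule sum_mono) (rule entry)
    finally show ?thesis by (simp add: mult.commute)
  qed
  have "norm (matrix_of_linop X) \<le> (\<Sum>i\<in>UNIV. norm (matrix_of_linop X $ i))"
    by (simp add: norm_vec_def L2_set_le_sum)
  also have "\<dots> \<le> (\<Sum>i\<in>(UNIV::'n set). norm X * real CARD('n))"
    by (rule sum_mono) (rule row)
  finally show ?thesis by (simp add: algebra_simps)
qed

lemma bounded_linear_matrix_of_linop: "bounded_linear (matrix_of_linop :: 'n::finite linop \<Rightarrow> _)"
proof
  show "matrix_of_linop (X + Y) = matrix_of_linop X + matrix_of_linop Y" for X Y :: "'n linop"
    by (simp add: vec_eq_iff matrix_of_linop_component linop_apply.add_left)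
  show "\<exists>K. \<forall>X. norm (matrix_of_linop (X::'n linop)) \<le> norm X * K"
    using norm_matrix_of_linop_le by blast
qed (rule matrix_of_linop_scaleR)

lemma matrix_of_linop_exp: "matrix_of_linop (exp X) = mat_exp (matrix_of_linop X)"
proof -
  have "(\<lambda>k. (1 / fact k) *\<^sub>R X ^ k) sums exp X"
    using exp_converges[of X] by (simp add: divide_inverse_commute scaleR_conv_of_real)
  from bounded_linear.sums[OF bounded_linear_matrix_of_linop this]
  have "(\<lambda>k. (1 / fact k) *\<^sub>R mat_pow (matrix_of_linop X) k) sums matrix_of_linop (exp X)"
    by (simp add: matrix_of_linop_scaleR matrix_of_linop_power)
  then show ?thesis unfolding mat_exp_def by (simp add: sums_iff)
qed

text \<open>Uniqueness for the linear ODE \<open>f' = B f\<close>: the curve \<open>exp(-s B) f(s)\<close> has zero derivative.\<close>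

lemma linear_ode_solution_eq_exp:
  fixes f :: "real \<Rightarrow> real^'n::finite"
  assumes ode: "\<And>s. s \<in> closed_segment 0 t \<Longrightarrow>
      (f has_vector_derivative linop_apply B (f s)) (at s within closed_segment 0 t)"
  shows "f t = linop_apply (exp (t *\<^sub>R B)) (f 0)"
proof -
  define S where "S = closed_segment 0 t"
  define w where "w s = linop_apply (exp (s *\<^sub>R (- B))) (f s)" for s
  have "(w has_derivative (\<lambda>h. 0)) (at s within S)" if s: "s \<in> S" for s
  proof -
    have "(w has_vector_derivative
        linop_apply (exp (s *\<^sub>R (- B))) (linop_apply B (f s))
          + linop_apply (exp (s *\<^sub>R (- B)) * (- B)) (f s)) (at s within S)"
      unfolding w_def
      by (rule linop_apply.has_vector_derivative[OF exp_scaleR_has_vector_derivative_right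
            ode[OF s[unfolded S_def], folded S_def]])
    then show ?thesis
      by (simp add: has_vector_derivative_def linop_apply_times linop_apply.minus_left
          linop_apply.minus_right)
  qed
  then obtain c where "\<And>s. s \<in> S \<Longrightarrow> w s = c"
    using has_derivative_zero_constant[of S w] unfolding S_def by auto
  then have "w t = w 0" unfolding S_def by simp
  then have wt: "linop_apply (exp (- (t *\<^sub>R B))) (f t) = f 0"
    unfolding w_def by (simp add: linop_apply_one)
  have "f t = linop_apply (exp (t *\<^sub>R B) * exp (- (t *\<^sub>R B))) (f t)"
    by (simp add: exp_minus_inverse linop_apply_one)
  also have "\<dots> = linop_apply (exp (t *\<^sub>R B)) (f 0)"
    by (simp add: linop_apply_times wt)
  finally show ?thesis .
qed

lemma has_derivative_eq_matrix_of_linop: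
  assumes "open V" "x \<in> V" "\<And>y. y \<in> V \<Longrightarrow> f y = linop_apply X y"
    and "(f has_derivative (\<lambda>v. J *v v)) (at x)"
  shows "J = matrix_of_linop X"
proof -
  have "(linop_apply X has_derivative linop_apply X) (at x)"
    by (rule bounded_linear.has_derivative[OF linop_apply.bounded_linear_right]) simp
  then have "(f has_derivative linop_apply X) (at x)"
    by (rule has_derivative_transform_within_open[OF _ assms(1,2)]) (simp add: assms(3))
  with assms(4) have "(\<lambda>v. J *v v) = linop_apply X"
    by (rule has_derivative_unique)
  then show ?thesis
    unfolding matrix_of_linop_def by (metis matrix_of_matrix_vector_mul)
qed

lemma xi0_eq_matrix_vector_mult: "xi0 \<beta> E \<omega> y = (- Domega \<beta> E \<omega>) *v y"
proof (rule vec_eq_iff[THEN iffD2, rule_format])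
  fix b
  have "(\<Sum>i\<in>UNIV. \<omega> $ i * - (\<Sum>a\<in>UNIV. Dmat \<beta> E i $ b $ a * y $ a))
      = - (\<Sum>i\<in>UNIV. \<Sum>a\<in>UNIV. \<omega> $ i * Dmat \<beta> E i $ b $ a * y $ a)"
    by (simp only: sum_distrib_left mult_minus_right sum_negf mult.assoc)
  also have "\<dots> = - (\<Sum>a\<in>UNIV. \<Sum>i\<in>UNIV. \<omega> $ i * Dmat \<beta> E i $ b $ a * y $ a)"
    by (rule arg_cong[where f=uminus], rule sum.swap)
  also have "\<dots> = (\<Sum>a\<in>UNIV. - (\<Sum>i\<in>UNIV. \<omega> $ i * Dmat \<beta> E i $ b $ a) * y $ a)"
    by (simp only: sum_distrib_right mult_minus_left sum_negf)
  finally show "xi0 \<beta> E \<omega> y $ b = (- Domega \<beta> E \<omega> *v y) $ b"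
    by (simp add: xi0_def Lfield_def Domega_def matrix_vector_mult_def sum_component)
qed

lemma matrix_inv_mat_1: "matrix_inv (mat 1 :: real^'n^'n) = mat 1"
  unfolding matrix_inv_def by (rule some_equality) (simp_all add: matrix_mul_lid matrix_mul_rid)

theorem mainTheorem5:
  fixes \<beta> :: "real^'p^'p" and E :: "'p \<Rightarrow> real^'n^'n" and \<omega> :: "real^'p"
    and \<psi> :: "real \<Rightarrow> real^'n \<Rightarrow> real^'n"
    and e :: "real^'n \<Rightarrow> real^'n^'n"
    and J :: "real^'n^'n" and t :: real and V :: "(real^'n) set"
  assumes E_antisym: "\<And>i. transpose (E i) = - E i"
    and \<beta>_sym: "transpose \<beta> = \<beta>"
    and \<beta>_nondeg: "det \<beta> \<noteq> 0"
    and V: "open V" "0 \<in> V"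
    and flow0: "\<And>y. y \<in> V \<Longrightarrow> \<psi> 0 y = y"
    and flow: "\<And>y s. y \<in> V \<Longrightarrow> s \<in> closed_segment 0 t \<Longrightarrow>
        ((\<lambda>r. \<psi> r y) has_vector_derivative xi0 \<beta> E \<omega> (\<psi> s y)) (at s within closed_segment 0 t)"
    and frame0: "e 0 = mat 1"
    and frame_inv: "\<And>y. invertible (e y)"
    and jac: "(\<psi> t has_derivative (\<lambda>v. J *v v)) (at 0)"
  shows "matrix_inv (e (\<psi> t 0)) ** J ** e 0 = mat_exp (- (t *\<^sub>R Domega \<beta> E \<omega>))"
proof -
  define B where "B = linop_of_matrix (- Domega \<beta> E \<omega>)"
  have "xi0 \<beta> E \<omega> = linop_apply B"
    by (simp add: fun_eq_iff B_def linop_apply_of_matrix xi0_eq_matrix_vector_mult)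
  with flow flow0 have linear_flow: "\<psi> t y = linop_apply (exp (t *\<^sub>R B)) y" if "y \<in> V" for y
    using linear_ode_solution_eq_exp[of t "\<lambda>r. \<psi> r y" B] that by simp
  have "J = matrix_of_linop (exp (t *\<^sub>R B))"
    using has_derivative_eq_matrix_of_linop[OF V linear_flow jac] .
  also have "\<dots> = mat_exp (- (t *\<^sub>R Domega \<beta> E \<omega>))"
    by (simp add: matrix_of_linop_exp matrix_of_linop_scaleR B_def matrix_of_linop_of_matrix)
  finally have J: "J = mat_exp (- (t *\<^sub>R Domega \<beta> E \<omega>))" .
  have "\<psi> t 0 = 0"
    using linear_flow[OF V(2)] linop_apply.zero_right by simp
  then show ?thesis
    by (simp add: frame0 matrix_inv_mat_1 matrix_mul_lid matrix_mul_rid J)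
qed

end
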